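(* Let $(\Xi,\mathcal{F},P)$ be a probability space and $\{y_t\}_{t\in\mathbb{Z}}$ a real, mean-zero, covariance-stationary series on it; put $\mathcal{F}_t=\sigma(y_s,\,s\le t)$. Assume (D1) $P\{y_1^2>0\}=1$; (D2) $y_t=\sum_{s=0}^{\infty}\kappa_s\epsilon_{t-s}$ with $\kappa_0=1$, $\sum_s|\kappa_s|<\infty$, $\kappa(z)=\sum_s\kappa_s z^s\neq 0$ for $|z|\le 1$, where $\{\epsilon_t\}$ is a martingale difference sequence with respect to $\{\mathcal{F}_t\}$; (D3) $E[\epsilon_t^2\mid\mathcal{F}_{t-1}]=\sigma_\epsilon^2$ a.s. (constant); (D4) $\sup_t|\epsilon_t|\le K<\infty$ a.s. Fix $\beta\in[0,1]$, let $\theta_t$ be generated by the recursive algorithm in the context, and assume there are random variables $k^*$ (integer, $0\le k^*<\infty$) and $K^*\in(0,1)$ such that a.s. $|\theta_{t+k^*}|\le K^*$ for all $t\ge1$. Then for each integer $u\ge0$ and each (possibly random) integer $0\le k^*<\infty$, $$\frac{\sigma_\epsilon^2}{t}\sum_{s=1}^t\sum_{j=0}^u\big(\kappa_j^\phi(s)\big)^2=\frac{\sigma_\epsilon^2}{t}\sum_{s=1}^t\sum_{j=0}^u\Big(\sum_{l=0}^j(-\theta_{s+k^*})^l\sum_{p=0}^{j-l}(-\beta\theta_{s+k^*})^p\kappa_{j-l-p}\Big)^2+o_{a.s.}(1).$$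
   Context: Recursive algorithm: set $\theta_1=0$, $\bar P_1=0$, $e_1=y_1$, $x_1=y_1$, $\phi_1=x_1$, and for $t\ge2$: $x_t=y_t-\beta\theta_{t-1}x_{t-1}$; $e_t=y_t-\theta_{t-1}e_{t-1}$; $\phi_t=x_t-\theta_{t-1}\phi_{t-1}$; $\bar P_t=\frac1t\sum_{s=1}^{t-1}\phi_s^2$; $\theta_t=\theta_{t-1}+\bar P_t^{-1}\frac1t\phi_{t-1}e_t$. Coefficients: for $t\ge1$, $j\ge0$ (empty products equal 1), $\kappa_j^x(t)=\sum_{l=0}^{\min(j,t-1)}(-\beta)^l\kappa_{j-l}\prod_{i=1}^l\theta_{t-i}$; $\kappa_j^\phi(1)=\kappa_j$ and $\kappa_j^\phi(t)=\kappa_j^x(t)-\theta_{t-1}\kappa_{j-1}^\phi(t-1)$ for $t\ge2$, with $\kappa_{-1}^\phi(\cdot):=0$; these are the coefficients in $\phi_t=\sum_{j\ge0}\kappa_j^\phi(t)\epsilon_{t-j}$. The notation $o_{a.s.}(1)$ denotes a term converging to $0$ almost surely as $t\to\infty$. *)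

theory Defs
  imports "HOL-Probability.Probability"
begin

definition nat_filt :: "'a measure \<Rightarrow> (int \<Rightarrow> 'a \<Rightarrow> real) \<Rightarrow> int \<Rightarrow> 'a measure" where
  "nat_filt M y t = sigma (space M) (\<Union>s\<in>{..t}. (\<lambda>A. y s -` A \<inter> space M) ` sets borel)"

text \<open>State of the recursive algorithm. alg_state beta y n is the tuple
  (theta_t, x_t, e_t, phi_t, S_t) at time t = n+1, where S_t = sum_{s=1}^t phi_s^2,
  so that Pbar_t = S_{t-1}/t.  Pbar_t^{-1} is Isabelle's inverse (inverse 0 = 0).\<close>
fun alg_state :: "real \<Rightarrow> (nat \<Rightarrow> real) \<Rightarrow> nat \<Rightarrow> real \<times> real \<times> real \<times> real \<times> real" where
  "alg_state beta y 0 = (0, y 1, y 1, y 1, (y 1)^2)"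
| "alg_state beta y (Suc n) =
     (case alg_state beta y n of (th, xp, ep, php, Sp) \<Rightarrow>
       (let t = real (n + 2);
            x = y (n + 2) - beta * th * xp;
            e = y (n + 2) - th * ep;
            ph = x - th * php;
            Pbar = Sp / t;
            th' = th + inverse Pbar * (1 / t) * php * e
        in (th', x, e, ph, Sp + ph^2)))"

text \<open>theta_t for t \<ge> 1 (the value at t = 0 is irrelevant).\<close>
definition theta :: "real \<Rightarrow> (nat \<Rightarrow> real) \<Rightarrow> nat \<Rightarrow> real" where
  "theta beta y t = fst (alg_state beta y (t - 1))"

definition kappa_x :: "(nat \<Rightarrow> real) \<Rightarrow> real \<Rightarrow> (nat \<Rightarrow> real) \<Rightarrow> nat \<Rightarrow> nat \<Rightarrow> real" where
  "kappa_x kappa beta th t j =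
     (\<Sum>l = 0..min j (t - 1). (- beta) ^ l * kappa (j - l) * (\<Prod>i = 1..l. th (t - i)))"

text \<open>kphi_aux n j = kappa^phi_j(n+1).\<close>
fun kphi_aux :: "(nat \<Rightarrow> real) \<Rightarrow> real \<Rightarrow> (nat \<Rightarrow> real) \<Rightarrow> nat \<Rightarrow> nat \<Rightarrow> real" where
  "kphi_aux kappa beta th 0 j = kappa j"
| "kphi_aux kappa beta th (Suc n) j =
     kappa_x kappa beta th (n + 2) j
     - th (n + 1) * (case j of 0 \<Rightarrow> 0 | Suc j' \<Rightarrow> kphi_aux kappa beta th n j')"

definition kappa_phi :: "(nat \<Rightarrow> real) \<Rightarrow> real \<Rightarrow> (nat \<Rightarrow> real) \<Rightarrow> nat \<Rightarrow> nat \<Rightarrow> real" where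
  "kappa_phi kappa beta th t j = kphi_aux kappa beta th (t - 1) j"

end

theory Submission
  imports Defs
begin

text \<open>
  Only three pathwise facts are used: \<open>y\<close> is bounded (\<open>|y t| \<le> K \<Sum>|\<kappa> s|\<close> by (D2)
  and (D4)), \<open>y 1 \<noteq> 0\<close> (D1), and eventually \<open>|\<theta> t| \<le> K\<^sup>* < 1\<close>. On such a path \<open>e\<close> satisfies a contracting linear
  recursion and stays bounded, while \<open>\<phi> t / S t \<rightarrow> 0\<close> for \<open>S t = \<Sum>\<^sub>s\<^sub>\<le>\<^sub>t \<phi> s\<^sup>2\<close>;
  hence \<open>\<theta> (t+1) - \<theta> t = \<phi> t \<cdot> e (t+1) / S t \<rightarrow> 0\<close>. A bounded sequence with vanishing
  increments is asymptotically constant on windows of fixed length, so \<open>\<kappa>\<^sup>\<phi>\<^sub>j(t)\<close>, a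
  polynomial in \<open>\<theta> (t-1), \<dots>, \<theta> (t-j)\<close>, is asymptotically its value with every \<open>\<theta>\<close>
  frozen at \<open>\<theta> (t+k)\<close>. Squares and Cesaro means preserve this.
\<close>

lemma tendsto_zero_mult_Bseq:
  fixes f g :: "nat \<Rightarrow> 'a::real_normed_algebra"
  assumes "f \<longlonglongrightarrow> 0" "Bseq g"
  shows "(\<lambda>n. f n * g n) \<longlonglongrightarrow> 0"
  using bounded_bilinear.Zfun_prod_Bfun[OF bounded_bilinear_mult, of f sequentially g] assms
  by (simp add: tendsto_Zfun_iff)

lemma tendsto_diff_mult_zero:
  fixes a a' b b' :: "nat \<Rightarrow> 'a::real_normed_algebra"
  assumes "(\<lambda>n. a n - a' n) \<longlonglongrightarrow> 0" "(\<lambda>n. b n - b' n) \<longlonglongrightarrow> 0" "Bseq a'" "Bseq b'"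
  shows "(\<lambda>n. a n * b n - a' n * b' n) \<longlonglongrightarrow> 0"
proof -
  have "(\<lambda>n. a' n * (b n - b' n)) \<longlonglongrightarrow> 0"
    using bounded_bilinear.Bfun_prod_Zfun[OF bounded_bilinear_mult, of a' sequentially] assms
    by (simp add: tendsto_Zfun_iff)
  moreover have "(\<lambda>n. (a n - a' n) * b' n) \<longlonglongrightarrow> 0"
    using assms(1,4) by (rule tendsto_zero_mult_Bseq)
  moreover have "(\<lambda>n. (a n - a' n) * (b n - b' n)) \<longlonglongrightarrow> 0 * 0"
    using assms(1,2) by (rule tendsto_mult)
  ultimately have "(\<lambda>n. (a n - a' n) * (b n - b' n) + (a n - a' n) * b' n + a' n * (b n - b' n))
      \<longlonglongrightarrow> 0 * 0 + 0 + 0"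
    by (intro tendsto_add)
  then show ?thesis
    by (simp add: algebra_simps)
qed

lemma Bseq_continuous_comp:
  fixes f :: "'a::{heine_borel,real_normed_vector} \<Rightarrow> 'b::real_normed_vector"
  assumes "Bseq th" "continuous_on UNIV f"
  shows "Bseq (\<lambda>n. f (th n))"
proof -
  obtain R where R: "\<And>n. norm (th n) \<le> R"
    using assms(1) unfolding Bseq_def by blast
  have "bounded (f ` cball 0 R)"
    using assms(2) by (intro compact_imp_bounded compact_continuous_image)
      (auto intro: continuous_on_subset)
  then obtain B where "\<forall>x\<in>f ` cball 0 R. norm x \<le> B"
    by (auto simp: bounded_iff)
  then show ?thesis
    using R by (intro BseqI'[of _ B]) auto
qed

lemma Cesaro_mean_tendsto_zero:
  fixes a :: "nat \<Rightarrow> real"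
  assumes "a \<longlonglongrightarrow> 0"
  shows "(\<lambda>t. (\<Sum>s=1..t. a s) / real t) \<longlonglongrightarrow> 0"
proof (rule LIMSEQ_I)
  fix r :: real
  assume r: "0 < r"
  obtain N where N: "\<And>n. n \<ge> N \<Longrightarrow> \<bar>a n\<bar> < r / 2"
    using LIMSEQ_D[OF assms, of "r / 2"] r by auto
  define C where "C = (\<Sum>s=1..N. \<bar>a s\<bar>)"
  obtain N' :: nat where N': "2 * C / r < real N'"
    using reals_Archimedean2 by blast
  have "\<bar>(\<Sum>s=1..n. a s) / real n\<bar> < r" if n: "n \<ge> max (Suc N) N'" for n
  proof -
    have "{1..n} = {1..N} \<union> {Suc N..n}"
      using n by auto
    then have "(\<Sum>s=1..n. a s) = (\<Sum>s=1..N. a s) + (\<Sum>s=Suc N..n. a s)"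
      by (simp add: sum.union_disjoint)
    also have "\<bar>\<dots>\<bar> \<le> C + (\<Sum>s=Suc N..n. \<bar>a s\<bar>)"
      unfolding C_def by (intro abs_triangle_ineq[THEN order_trans] add_mono sum_abs)
    also have "(\<Sum>s=Suc N..n. \<bar>a s\<bar>) \<le> (\<Sum>s=Suc N..n. r / 2)"
      using N by (intro sum_mono) (auto intro: less_imp_le)
    also have "\<dots> \<le> real n * (r / 2)"
      using r by simp
    also have "C < real n * (r / 2)"
    proof -
      have "2 * C / r < real n"
        using N' n by linarith
      then show ?thesis
        using r by (simp add: field_simps)
    qed
    finally have "\<bar>\<Sum>s=1..n. a s\<bar> < real n * r"
      by (simp add: mult.commute)
    then show ?thesis
      using n by (simp add: abs_divide field_simps)
  qed
  then show "\<exists>n0. \<forall>n\<ge>n0. norm ((\<Sum>s=1..n. a s) / real n - 0) < r"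
    by (metis real_norm_def diff_zero)
qed

definition slowly_varying :: "(nat \<Rightarrow> 'a::real_normed_vector) \<Rightarrow> bool" where
  "slowly_varying th \<longleftrightarrow> (\<lambda>n. th (Suc n) - th n) \<longlonglongrightarrow> 0"

lemma slowly_varying_shift_diff:
  assumes "slowly_varying th"
  shows "(\<lambda>n. th (n + a) - th (n + b)) \<longlonglongrightarrow> 0"
proof -
  have shift: "(\<lambda>n. th (n + d) - th n) \<longlonglongrightarrow> 0" for d
  proof (induction d)
    case 0
    then show ?case by simp
  next
    case (Suc d)
    have "(\<lambda>n. th (Suc (n + d)) - th (n + d)) \<longlonglongrightarrow> 0"
      using LIMSEQ_ignore_initial_segment[OF assms[unfolded slowly_varying_def], of d] by simp
    from tendsto_add[OF this Suc.IH] show ?case by simp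
  qed
  from tendsto_diff[OF shift[of a] shift[of b]] show ?thesis by simp
qed

lemma slowly_varying_prod_diff_power:
  fixes th :: "nat \<Rightarrow> real"
  assumes "Bseq th" "slowly_varying th" "finite I"
  shows "(\<lambda>n. (\<Prod>i\<in>I. th (n + f i)) - th (n + b) ^ card I) \<longlonglongrightarrow> 0"
  using assms(3)
proof (induction I rule: finite_induct)
  case empty
  then show ?case by simp
next
  case (insert i I)
  have "Bseq (\<lambda>n. th (n + b))"
    using Bseq_subseq[OF assms(1)] .
  moreover have "Bseq (\<lambda>n. th (n + b) ^ card I)"
    by (rule Bseq_continuous_comp[OF \<open>Bseq (\<lambda>n. th (n + b))\<close>]) (intro continuous_intros)
  ultimately have "(\<lambda>n. th (n + f i) * (\<Prod>i\<in>I. th (n + f i)) - th (n + b) * th (n + b) ^ card I)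
      \<longlonglongrightarrow> 0"
    by (intro tendsto_diff_mult_zero slowly_varying_shift_diff assms(2) insert.IH)
  then show ?case
    using insert.hyps by simp
qed

text \<open>\<open>\<kappa>\<^sup>x\<^sub>j\<close> and \<open>\<kappa>\<^sup>\<phi>\<^sub>j\<close> for the constant sequence \<open>\<theta> = c\<close> (once \<open>t > j\<close>).\<close>

definition kappa_x_const :: "(nat \<Rightarrow> real) \<Rightarrow> real \<Rightarrow> nat \<Rightarrow> real \<Rightarrow> real" where
  "kappa_x_const kappa beta j c = (\<Sum>p = 0..j. (- beta * c) ^ p * kappa (j - p))"

definition kappa_phi_const :: "(nat \<Rightarrow> real) \<Rightarrow> real \<Rightarrow> nat \<Rightarrow> real \<Rightarrow> real" where
  "kappa_phi_const kappa beta j c = (\<Sum>l = 0..j. (- c) ^ l * kappa_x_const kappa beta (j - l) c)"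

lemma kappa_phi_const_0 [simp]: "kappa_phi_const kappa beta 0 c = kappa 0"
  by (simp add: kappa_phi_const_def kappa_x_const_def)

lemma kappa_phi_const_Suc:
  "kappa_phi_const kappa beta (Suc j) c =
     kappa_x_const kappa beta (Suc j) c - c * kappa_phi_const kappa beta j c"
proof -
  have "kappa_phi_const kappa beta (Suc j) c =
      kappa_x_const kappa beta (Suc j) c + (\<Sum>l = 0..j. (- c) ^ Suc l * kappa_x_const kappa beta (j - l) c)"
    unfolding kappa_phi_const_def by (simp only: sum.atLeast0_atMost_Suc_shift) simp
  then show ?thesis
    by (simp add: kappa_phi_const_def sum_distrib_left sum_negf[symmetric] mult.assoc)
qed

lemma continuous_on_kappa_phi_const: "continuous_on UNIV (kappa_phi_const kappa beta j)"
  unfolding kappa_phi_const_def kappa_x_const_def by (intro continuous_intros)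

lemma kappa_phi_0 [simp]: "kappa_phi kappa beta th t 0 = kappa 0"
proof -
  have "kphi_aux kappa beta th n 0 = kappa 0" for n
    by (induction n) (auto simp: kappa_x_def)
  then show ?thesis
    by (simp add: kappa_phi_def)
qed

lemma kappa_phi_Suc:
  "kappa_phi kappa beta th (Suc (Suc n)) (Suc j) =
     kappa_x kappa beta th (Suc (Suc n)) (Suc j) - th (Suc n) * kappa_phi kappa beta th (Suc n) j"
  by (simp add: kappa_phi_def)

lemma kappa_x_asymptotic:
  assumes "Bseq th" "slowly_varying th"
  shows "(\<lambda>t. kappa_x kappa beta th t j - kappa_x_const kappa beta j (th (t + k))) \<longlonglongrightarrow> 0"
proof (rule LIMSEQ_offset[where k = "Suc j"])
  have "kappa_x kappa beta th (n + Suc j) j - kappa_x_const kappa beta j (th (n + Suc j + k)) =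
      (\<Sum>l = 0..j. (- beta) ^ l * kappa (j - l) *
         ((\<Prod>i\<in>{1..l}. th (n + (Suc j - i))) - th (n + (Suc j + k)) ^ card {1..l}))" for n
  proof -
    have "kappa_x kappa beta th (n + Suc j) j =
        (\<Sum>l = 0..j. (- beta) ^ l * kappa (j - l) * (\<Prod>i\<in>{1..l}. th (n + (Suc j - i))))"
      unfolding kappa_x_def by (intro sum.cong arg_cong2[where f = "(*)"] prod.cong) auto
    moreover have "kappa_x_const kappa beta j c = (\<Sum>l = 0..j. (- beta) ^ l * kappa (j - l) * c ^ card {1..l})"
      for c
      unfolding kappa_x_const_def by (intro sum.cong) (simp_all add: power_mult_distrib[symmetric])
    ultimately show ?thesis
      by (simp add: right_diff_distrib sum_subtractf add_ac)
  qed
  moreover have "(\<lambda>n. \<Sum>l = 0..j. (- beta) ^ l * kappa (j - l) *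
      ((\<Prod>i\<in>{1..l}. th (n + (Suc j - i))) - th (n + (Suc j + k)) ^ card {1..l})) \<longlonglongrightarrow> 0"
    using assms by (intro tendsto_null_sum tendsto_mult_right_zero slowly_varying_prod_diff_power) auto
  ultimately show "(\<lambda>n. kappa_x kappa beta th (n + Suc j) j - kappa_x_const kappa beta j (th (n + Suc j + k)))
      \<longlonglongrightarrow> 0"
    by simp
qed

lemma kappa_phi_asymptotic:
  assumes "Bseq th" "slowly_varying th"
  shows "(\<lambda>t. kappa_phi kappa beta th t j - kappa_phi_const kappa beta j (th (t + k))) \<longlonglongrightarrow> 0"
proof (induction j arbitrary: k)
  case 0
  then show ?case by simp
next
  case (Suc j)
  let ?c = "\<lambda>n. th (n + 2 + k)"
  have "Bseq ?c"
    using assms(1) by (rule Bseq_subseq)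
  have "(\<lambda>n. kappa_x kappa beta th (n + 2) (Suc j) - kappa_x_const kappa beta (Suc j) (?c n)) \<longlonglongrightarrow> 0"
  proof -
    have "(\<lambda>t. kappa_x kappa beta th t (Suc j) - kappa_x_const kappa beta (Suc j) (th (t + k))) \<longlonglongrightarrow> 0"
      using assms by (rule kappa_x_asymptotic)
    from LIMSEQ_ignore_initial_segment[OF this, of 2] show ?thesis
      by (simp add: add_ac)
  qed
  moreover have "(\<lambda>n. th (n + 1) * kappa_phi kappa beta th (n + 1) j
      - ?c n * kappa_phi_const kappa beta j (?c n)) \<longlonglongrightarrow> 0"
  proof (rule tendsto_diff_mult_zero)
    show "(\<lambda>n. th (n + 1) - ?c n) \<longlonglongrightarrow> 0"
      using slowly_varying_shift_diff[OF assms(2), of 1 "2 + k"] by (simp add: add_ac)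
    show "(\<lambda>n. kappa_phi kappa beta th (n + 1) j - kappa_phi_const kappa beta j (?c n)) \<longlonglongrightarrow> 0"
      using LIMSEQ_ignore_initial_segment[OF Suc.IH[of "Suc k"], of 1] by (simp add: add_ac)
    show "Bseq (\<lambda>n. kappa_phi_const kappa beta j (?c n))"
      using \<open>Bseq ?c\<close> continuous_on_kappa_phi_const by (rule Bseq_continuous_comp)
  qed fact
  ultimately have "(\<lambda>n. (kappa_x kappa beta th (n + 2) (Suc j) - kappa_x_const kappa beta (Suc j) (?c n))
      - (th (n + 1) * kappa_phi kappa beta th (n + 1) j - ?c n * kappa_phi_const kappa beta j (?c n)))
      \<longlonglongrightarrow> 0 - 0"
    by (rule tendsto_diff)
  then have "(\<lambda>n. kappa_phi kappa beta th (n + 2) (Suc j)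
      - kappa_phi_const kappa beta (Suc j) (th (n + 2 + k))) \<longlonglongrightarrow> 0"
    by (simp add: kappa_phi_Suc kappa_phi_const_Suc algebra_simps)
  then show ?case
    by (rule LIMSEQ_offset)
qed

lemma kappa_phi_square_Cesaro_approx:
  assumes "Bseq th" "slowly_varying th"
  shows "(\<lambda>t. sigma_sq / real t * (\<Sum>s = 1..t. \<Sum>j = 0..u. (kappa_phi kappa beta th s j)^2)
      - sigma_sq / real t * (\<Sum>s = 1..t. \<Sum>j = 0..u. (kappa_phi_const kappa beta j (th (s + k)))^2))
      \<longlonglongrightarrow> 0"
proof -
  define d where "d s = (\<Sum>j = 0..u. (kappa_phi kappa beta th s j)^2
    - (kappa_phi_const kappa beta j (th (s + k)))^2)" for s
  have "Bseq (\<lambda>s. kappa_phi_const kappa beta j (th (s + k)))" for j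
    using Bseq_subseq[OF assms(1)] continuous_on_kappa_phi_const by (rule Bseq_continuous_comp)
  then have "d \<longlonglongrightarrow> 0"
    unfolding d_def power2_eq_square
    by (intro tendsto_null_sum tendsto_diff_mult_zero kappa_phi_asymptotic assms)
  then have "(\<lambda>t. sigma_sq * ((\<Sum>s = 1..t. d s) / real t)) \<longlonglongrightarrow> sigma_sq * 0"
    by (intro tendsto_mult tendsto_const Cesaro_mean_tendsto_zero)
  then show ?thesis
    by (simp add: d_def sum_subtractf right_diff_distrib diff_divide_distrib)
qed

text \<open>As in \<^const>\<open>alg_state\<close>, the index \<open>n\<close> stands for time \<open>t = n + 1\<close>.\<close>

definition alg_theta :: "real \<Rightarrow> (nat \<Rightarrow> real) \<Rightarrow> nat \<Rightarrow> real" where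
  "alg_theta beta y n = fst (alg_state beta y n)"

definition alg_e :: "real \<Rightarrow> (nat \<Rightarrow> real) \<Rightarrow> nat \<Rightarrow> real" where
  "alg_e beta y n = fst (snd (snd (alg_state beta y n)))"

definition alg_phi :: "real \<Rightarrow> (nat \<Rightarrow> real) \<Rightarrow> nat \<Rightarrow> real" where
  "alg_phi beta y n = fst (snd (snd (snd (alg_state beta y n))))"

definition alg_S :: "real \<Rightarrow> (nat \<Rightarrow> real) \<Rightarrow> nat \<Rightarrow> real" where
  "alg_S beta y n = snd (snd (snd (snd (alg_state beta y n))))"

lemma theta_Suc_eq_alg_theta: "theta beta y (Suc n) = alg_theta beta y n"
  by (simp add: theta_def alg_theta_def)

lemma alg_S_0: "alg_S beta y 0 = (y 1)^2"
  by (simp add: alg_S_def)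

lemma alg_S_Suc: "alg_S beta y (Suc n) = alg_S beta y n + (alg_phi beta y (Suc n))^2"
  by (simp add: alg_S_def alg_phi_def Let_def split: prod.split)

lemma alg_e_Suc: "alg_e beta y (Suc n) = y (n + 2) - alg_theta beta y n * alg_e beta y n"
  by (simp add: alg_e_def alg_theta_def Let_def split: prod.split)

text \<open>The normalisation cancels: \<open>P\<^sub>t\<^sup>-\<^sup>1 / t = 1 / S\<^sub>t\<^sub>-\<^sub>1\<close>.\<close>

lemma alg_theta_Suc:
  "alg_theta beta y (Suc n) =
     alg_theta beta y n + alg_phi beta y n / alg_S beta y n * alg_e beta y (Suc n)"
  by (simp add: alg_theta_def alg_phi_def alg_S_def alg_e_def Let_def field_simps split: prod.split)

lemma square_increment_ratio_tendsto_zero: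
  fixes S p :: "nat \<Rightarrow> real"
  assumes "0 < S 0" and S_Suc: "\<And>n. S (Suc n) = S n + (p (Suc n))^2"
  shows "(\<lambda>n. p n / S n) \<longlonglongrightarrow> 0"
proof -
  have S_pos: "0 < S n" for n
    by (induction n) (use assms in \<open>auto intro: add_pos_nonneg\<close>)
  have S_mono: "S n \<le> S (Suc n)" for n
    by (simp add: S_Suc)
  define r where "r n = 1 / S n" for n
  have "decseq r"
    unfolding r_def by (rule decseq_SucI) (use S_pos S_mono in \<open>simp add: frac_le\<close>)
  moreover have "0 \<le> r n" for n
    using S_pos[of n] by (simp add: r_def)
  ultimately obtain L where "r \<longlonglongrightarrow> L"
    using decseq_convergent by blast
  then have sqrt_lim: "(\<lambda>n. sqrt (r n - r (Suc n))) \<longlonglongrightarrow> 0"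
    using tendsto_real_sqrt[OF tendsto_diff[OF \<open>r \<longlonglongrightarrow> L\<close> LIMSEQ_Suc[OF \<open>r \<longlonglongrightarrow> L\<close>]]] by simp
  \<comment> \<open>\<open>(p (n+1) / S (n+1))\<^sup>2 \<le> 1 / S n - 1 / S (n+1)\<close>, a telescoping bound\<close>
  have bound: "norm (p (Suc n) / S (Suc n)) \<le> sqrt (r n - r (Suc n))" for n
    unfolding real_norm_def
  proof (rule real_le_rsqrt)
    have "\<bar>p (Suc n) / S (Suc n)\<bar>^2 = (S (Suc n) - S n) / (S (Suc n) * S (Suc n))"
      by (simp add: S_Suc power_divide power2_eq_square)
    also have "\<dots> \<le> (S (Suc n) - S n) / (S n * S (Suc n))"
      using S_pos[of n] S_mono[of n] by (intro frac_le mult_right_mono) auto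
    also have "\<dots> = r n - r (Suc n)"
      using S_pos[of n] S_pos[of "Suc n"] by (simp add: r_def diff_frac_eq)
    finally show "\<bar>p (Suc n) / S (Suc n)\<bar>^2 \<le> r n - r (Suc n)" .
  qed
  have "(\<lambda>n. p (Suc n) / S (Suc n)) \<longlonglongrightarrow> 0"
    using always_eventually[OF allI[OF bound]] sqrt_lim by (rule Lim_null_comparison)
  then show ?thesis
    by (rule LIMSEQ_imp_Suc)
qed

lemma Bseq_contracting_recursion:
  fixes e a y :: "nat \<Rightarrow> real"
  assumes "Bseq y" "c < 1" and a_le: "\<And>n. N \<le> n \<Longrightarrow> \<bar>a n\<bar> \<le> c"
    and e_Suc: "\<And>n. e (Suc n) = y n - a n * e n"
  shows "Bseq e"
proof -
  obtain B where B: "\<And>n. \<bar>y n\<bar> \<le> B"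
    using assms(1) unfolding Bseq_def by auto
  have "0 \<le> c"
    using a_le[of N] by simp
  define M where "M = max \<bar>e N\<bar> (B / (1 - c))"
  have "B / (1 - c) \<le> M"
    by (simp add: M_def)
  then have "B \<le> M * (1 - c)"
    using \<open>c < 1\<close> by (simp add: pos_divide_le_eq)
  have "\<bar>e n\<bar> \<le> M" if "N \<le> n" for n
    using that
  proof (induction n rule: dec_induct)
    case base
    then show ?case by (simp add: M_def)
  next
    case (step n)
    have "\<bar>e (Suc n)\<bar> \<le> \<bar>y n\<bar> + \<bar>a n\<bar> * \<bar>e n\<bar>"
      unfolding e_Suc abs_mult[symmetric] by (rule abs_triangle_ineq4)
    also have "\<dots> \<le> B + c * M"
      using B a_le[OF step(1)] step(3) \<open>0 \<le> c\<close> by (intro add_mono mult_mono) auto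
    finally show ?case
      using \<open>B \<le> M * (1 - c)\<close> by (simp add: algebra_simps)
  qed
  then have "Bseq (\<lambda>n. e (n + N))"
    by (intro BseqI'[of _ M]) simp
  then show ?thesis
    by (rule Bseq_offset)
qed

lemma theta_bounded_slowly_varying:
  fixes y :: "nat \<Rightarrow> real"
  assumes "Bseq y" "y 1 \<noteq> 0" "c < 1" and theta_le: "\<forall>t\<ge>1. \<bar>theta beta y (t + N)\<bar> \<le> c"
  shows "Bseq (theta beta y)" "slowly_varying (theta beta y)"
proof -
  have alg_theta_le: "\<bar>alg_theta beta y n\<bar> \<le> c" if "N \<le> n" for n
    using theta_le[rule_format, of "Suc n - N"] that by (simp add: theta_Suc_eq_alg_theta Suc_diff_le)
  have "Bseq (\<lambda>n. theta beta y (n + Suc N))"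
    using alg_theta_le by (intro BseqI'[of _ c]) (simp add: theta_Suc_eq_alg_theta)
  then show "Bseq (theta beta y)"
    by (rule Bseq_offset)
  have "Bseq (\<lambda>n. alg_e beta y (Suc n))"
    unfolding Bseq_Suc_iff
    using Bseq_subseq[OF assms(1)] \<open>c < 1\<close> alg_theta_le alg_e_Suc
    by (rule Bseq_contracting_recursion[where y = "\<lambda>n. y (n + 2)" and e = "alg_e beta y"])
  moreover have "(\<lambda>n. alg_phi beta y n / alg_S beta y n) \<longlonglongrightarrow> 0"
    using assms(2) alg_S_Suc by (intro square_increment_ratio_tendsto_zero) (simp_all add: alg_S_0)
  ultimately have "(\<lambda>n. alg_phi beta y n / alg_S beta y n * alg_e beta y (Suc n)) \<longlonglongrightarrow> 0"
    by (intro tendsto_zero_mult_Bseq)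
  then have "(\<lambda>n. theta beta y (Suc (Suc n)) - theta beta y (Suc n)) \<longlonglongrightarrow> 0"
    by (simp add: theta_Suc_eq_alg_theta alg_theta_Suc)
  then show "slowly_varying (theta beta y)"
    unfolding slowly_varying_def by (rule LIMSEQ_imp_Suc)
qed

lemma abs_le_of_sums_bounded_factor:
  fixes a e :: "nat \<Rightarrow> real"
  assumes "(\<lambda>s. a s * e s) sums x" "summable (\<lambda>s. \<bar>a s\<bar>)" "\<And>s. \<bar>e s\<bar> \<le> K"
  shows "\<bar>x\<bar> \<le> (\<Sum>s. \<bar>a s\<bar>) * K"
proof -
  have bound: "(\<lambda>s. \<bar>a s\<bar> * K) sums ((\<Sum>s. \<bar>a s\<bar>) * K)"
    using assms(2) by (intro sums_mult2 summable_sums)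
  have "\<bar>a s * e s\<bar> \<le> \<bar>a s\<bar> * K" for s
    unfolding abs_mult using assms(3) by (intro mult_left_mono) auto
  then have "x \<le> (\<Sum>s. \<bar>a s\<bar>) * K" "- x \<le> (\<Sum>s. \<bar>a s\<bar>) * K"
    using sums_le[OF _ assms(1) bound] sums_le[OF _ sums_minus[OF assms(1)] bound]
    by (auto simp: abs_le_iff)
  then show ?thesis
    by linarith
qed

lemma theta_kappa_phi_Cesaro_approx:
  fixes y :: "nat \<Rightarrow> real"
  assumes "Bseq y" "y 1 \<noteq> 0" "c < 1" "\<forall>t\<ge>1. \<bar>theta beta y (t + N)\<bar> \<le> c"
  shows "(\<lambda>t::nat.
        let th = theta beta y in
        sigma_sq / real t * (\<Sum>s = 1..t. \<Sum>j = 0..u. (kappa_phi kappa beta th s j)^2)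
        - sigma_sq / real t * (\<Sum>s = 1..t. \<Sum>j = 0..u.
            (\<Sum>l = 0..j. (- th (s + k)) ^ l *
               (\<Sum>p = 0..j - l. (- beta * th (s + k)) ^ p * kappa (j - l - p)))^2))
      \<longlonglongrightarrow> 0"
  using kappa_phi_square_Cesaro_approx[where sigma_sq = sigma_sq and u = u and kappa = kappa
      and beta = beta and k = k, OF theta_bounded_slowly_varying[OF assms]]
  by (simp add: Let_def kappa_phi_const_def kappa_x_const_def)

theorem lemma4p4:
  fixes M :: "'a measure"
    and y eps :: "int \<Rightarrow> 'a \<Rightarrow> real"
    and kappa :: "nat \<Rightarrow> real"
    and sigma2 K beta :: real
    and kst :: "'a \<Rightarrow> nat" and Kst :: "'a \<Rightarrow> real"
  assumes "prob_space M"
    \<comment> \<open>real, mean-zero, covariance-stationary\<close>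
    and y_meas: "\<And>t. y t \<in> borel_measurable M"
    and y_L2: "\<And>t. integrable M (\<lambda>\<omega>. (y t \<omega>)^2)"
    and y_mean: "\<And>t. (\<integral>\<omega>. y t \<omega> \<partial>M) = 0"
    and y_cov: "\<And>t h. (\<integral>\<omega>. y (t + h) \<omega> * y t \<omega> \<partial>M) = (\<integral>\<omega>. y h \<omega> * y 0 \<omega> \<partial>M)"
    \<comment> \<open>(D1)\<close>
    and D1: "AE \<omega> in M. (y 1 \<omega>)^2 > 0"
    \<comment> \<open>(D2)\<close>
    and D2_rep: "\<And>t. AE \<omega> in M. (\<lambda>s. kappa s * eps (t - int s) \<omega>) sums y t \<omega>"
    and D2_k0: "kappa 0 = 1"
    and D2_abs: "summable (\<lambda>s. \<bar>kappa s\<bar>)"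
    and D2_root: "\<And>z::complex. norm z \<le> 1 \<Longrightarrow> (\<Sum>s. complex_of_real (kappa s) * z ^ s) \<noteq> 0"
    and mds_adapted: "\<And>t. eps t \<in> borel_measurable (nat_filt M y t)"
    and mds_int: "\<And>t. integrable M (eps t)"
    and mds: "\<And>t. AE \<omega> in M. real_cond_exp M (nat_filt M y (t - 1)) (eps t) \<omega> = 0"
    \<comment> \<open>(D3)\<close>
    and D3: "\<And>t. AE \<omega> in M.
               real_cond_exp M (nat_filt M y (t - 1)) (\<lambda>\<omega>. (eps t \<omega>)^2) \<omega> = sigma2"
    \<comment> \<open>(D4)\<close>
    and D4: "AE \<omega> in M. \<forall>t. \<bar>eps t \<omega>\<bar> \<le> K"
    and beta: "0 \<le> beta" "beta \<le> 1"
    \<comment> \<open>eventual bound on theta\<close>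
    and kst_rv: "kst \<in> measurable M (count_space UNIV)"
    and Kst_rv: "Kst \<in> borel_measurable M"
    and theta_bd: "AE \<omega> in M. 0 < Kst \<omega> \<and> Kst \<omega> < 1 \<and>
         (\<forall>t\<ge>1. \<bar>theta beta (\<lambda>s. y (int s) \<omega>) (t + kst \<omega>)\<bar> \<le> Kst \<omega>)"
  shows "\<forall>(u::nat) (k::'a \<Rightarrow> nat). k \<in> measurable M (count_space UNIV) \<longrightarrow>
    (AE \<omega> in M.
      (\<lambda>t::nat.
        let th = theta beta (\<lambda>s. y (int s) \<omega>) in
        sigma2 / real t * (\<Sum>s = 1..t. \<Sum>j = 0..u. (kappa_phi kappa beta th s j)^2)
        - sigma2 / real t * (\<Sum>s = 1..t. \<Sum>j = 0..u.
            (\<Sum>l = 0..j. (- th (s + k \<omega>)) ^ l *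
               (\<Sum>p = 0..j - l. (- beta * th (s + k \<omega>)) ^ p * kappa (j - l - p)))^2))
      \<longlonglongrightarrow> 0)"
proof -
  have "AE \<omega> in M. \<forall>t. (\<lambda>s. kappa s * eps (t - int s) \<omega>) sums y t \<omega>"
    using D2_rep by (simp add: AE_all_countable)
  with D4 have "AE \<omega> in M. Bseq (\<lambda>s. y (int s) \<omega>)"
  proof eventually_elim
    case (elim \<omega>)
    have "\<bar>y (int s) \<omega>\<bar> \<le> (\<Sum>s. \<bar>kappa s\<bar>) * K" for s
      by (rule abs_le_of_sums_bounded_factor[OF _ D2_abs]) (use elim in auto)
    then show ?case
      by (intro BseqI') simp
  qed
  \<comment> \<open>\<open>y (int 1)\<close> is \<open>(\<lambda>s. y (int s) \<omega>) 1\<close>, the form required below\<close>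
  with D1 theta_bd have path_conditions: "AE \<omega> in M. Bseq (\<lambda>s. y (int s) \<omega>) \<and> y (int 1) \<omega> \<noteq> 0 \<and> Kst \<omega> < 1 \<and>
      (\<forall>t\<ge>1. \<bar>theta beta (\<lambda>s. y (int s) \<omega>) (t + kst \<omega>)\<bar> \<le> Kst \<omega>)"
    by eventually_elim auto
  show ?thesis
    by (intro allI impI eventually_mono[OF path_conditions]) (elim conjE, rule theta_kappa_phi_Cesaro_approx)
qed

end
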